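(* For all $\boldsymbol\upsilon,\boldsymbol\xi\in P_{II}$: $\boldsymbol\upsilon\subseteq\boldsymbol\xi$ if and only if $\mathcal D_{\boldsymbol\upsilon\text{-unc}}\subseteq\mathcal D_{\boldsymbol\xi\text{-unc}}$.
   Context: Let $n\ge1$, $L=\{1,\dots,n\}$, and for $i\in L$ let $\mathcal H_i$ be a Hilbert space with $1<\dim\mathcal H_i<\infty$; $\mathcal H_X=\bigotimes_{i\in X}\mathcal H_i$ and $\mathcal D_X$ is the set of density operators on $\mathcal H_X$. $P_I$ is the set of partitions of $L$ ordered by refinement. For $\xi\in P_I$, $\mathcal D_{\xi\text{-unc}}=\{\varrho\in\mathcal D_L:\varrho=\bigotimes_{X\in\xi}\varrho_X,\ \varrho_X\in\mathcal D_X\}$. $P_{II}$ is the set of nonempty down-sets of $(P_I,\preceq)$ (nonempty sets of partitions closed under taking finer partitions), and for $\boldsymbol\xi\in P_{II}$, $\mathcal D_{\boldsymbol\xi\text{-unc}}=\bigcup_{\xi\in\boldsymbol\xi}\mathcal D_{\xi\text{-unc}}$. *)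

theory Defs
  imports Complex_Main "HOL-Library.Disjoint_Sets"
begin

text \<open>Concrete model: subsystem i (i in L = {1..n}) is the Hilbert space C^(d i).
  H_X = tensor product over i in X is modelled with the orthonormal product basis
  indexed by the configurations below (functions X -> nat with a i < d i, extended by 0).
  Operators on H_X are matrices indexed by configurations; entries outside are 0.\<close>

definition configs :: "(nat \<Rightarrow> nat) \<Rightarrow> nat set \<Rightarrow> (nat \<Rightarrow> nat) set" where
  "configs d X = {a. (\<forall>i\<in>X. a i < d i) \<and> (\<forall>i. i \<notin> X \<longrightarrow> a i = 0)}"

definition restr :: "nat set \<Rightarrow> (nat \<Rightarrow> nat) \<Rightarrow> (nat \<Rightarrow> nat)" where
  "restr X a = (\<lambda>i. if i \<in> X then a i else 0)"

definition density_ops :: "(nat \<Rightarrow> nat) \<Rightarrow> nat set \<Rightarrow> ((nat \<Rightarrow> nat) \<Rightarrow> (nat \<Rightarrow> nat) \<Rightarrow> complex) set" where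
  "density_ops d X = {M.
     (\<forall>a b. (a \<notin> configs d X \<or> b \<notin> configs d X) \<longrightarrow> M a b = 0) \<and>
     (\<forall>v :: (nat \<Rightarrow> nat) \<Rightarrow> complex.
        let q = (\<Sum>a\<in>configs d X. \<Sum>b\<in>configs d X. cnj (v a) * M a b * v b)
        in Im q = 0 \<and> Re q \<ge> 0) \<and>
     (\<Sum>a\<in>configs d X. M a a) = 1}"

definition tensor :: "(nat \<Rightarrow> nat) \<Rightarrow> nat set \<Rightarrow> nat set set
     \<Rightarrow> (nat set \<Rightarrow> (nat \<Rightarrow> nat) \<Rightarrow> (nat \<Rightarrow> nat) \<Rightarrow> complex)
     \<Rightarrow> ((nat \<Rightarrow> nat) \<Rightarrow> (nat \<Rightarrow> nat) \<Rightarrow> complex)" where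
  "tensor d L xi rho = (\<lambda>a b. if a \<in> configs d L \<and> b \<in> configs d L
       then (\<Prod>X\<in>xi. rho X (restr X a) (restr X b)) else 0)"

definition PI :: "nat \<Rightarrow> nat set set set" where
  "PI n = {xi. partition_on {1..n} xi}"

definition finer :: "nat set set \<Rightarrow> nat set set \<Rightarrow> bool" where
  "finer xi ups \<longleftrightarrow> (\<forall>X\<in>xi. \<exists>Y\<in>ups. X \<subseteq> Y)"

definition PII :: "nat \<Rightarrow> nat set set set set" where
  "PII n = {Xi. Xi \<noteq> {} \<and> Xi \<subseteq> PI n \<and>
      (\<forall>ups\<in>Xi. \<forall>xi\<in>PI n. finer xi ups \<longrightarrow> xi \<in> Xi)}"

definition unc :: "(nat \<Rightarrow> nat) \<Rightarrow> nat \<Rightarrow> nat set set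
     \<Rightarrow> ((nat \<Rightarrow> nat) \<Rightarrow> (nat \<Rightarrow> nat) \<Rightarrow> complex) set" where
  "unc d n xi = {rho. \<exists>rs. (\<forall>X\<in>xi. rs X \<in> density_ops d X) \<and> rho = tensor d {1..n} xi rs}"

definition unc2 :: "(nat \<Rightarrow> nat) \<Rightarrow> nat \<Rightarrow> nat set set set
     \<Rightarrow> ((nat \<Rightarrow> nat) \<Rightarrow> (nat \<Rightarrow> nat) \<Rightarrow> complex) set" where
  "unc2 d n Xi = (\<Union>xi\<in>Xi. unc d n xi)"

end

theory Submission
  imports Defs
begin

text \<open>For every block X of \<xi> take the equal mixture of the all-zero and all-one basis states
  of H_X. The \<xi>-product of these has nonzero diagonal entries at 0 and at 1_X, but vanishes on
  the diagonal at every configuration that is 1 on part of X and 0 on the rest. For any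
  \<upsilon>-product, the product of the diagonal entries at two configurations does not change when
  their values on a block Y of \<upsilon> are swapped. If X met some Y without being contained in it,
  swapping 0 and 1_X on Y would produce 1_(X\<inter>Y) and 1_(X-Y), so the \<xi>-product cannot be a
  \<upsilon>-product. Hence \<xi> refines \<upsilon>, and down-closure of \<Xi> gives \<xi> \<in> \<Xi>.\<close>

definition diag_op :: "((nat \<Rightarrow> nat) \<Rightarrow> real) \<Rightarrow> (nat \<Rightarrow> nat) \<Rightarrow> (nat \<Rightarrow> nat) \<Rightarrow> complex" where
  "diag_op p = (\<lambda>a b. if a = b then complex_of_real (p a) else 0)"

definition cat_mixture :: "nat set \<Rightarrow> (nat \<Rightarrow> nat) \<Rightarrow> (nat \<Rightarrow> nat) \<Rightarrow> complex" where
  "cat_mixture X = diag_op (\<lambda>a. if a \<in> {(\<lambda>_. 0), restr X (\<lambda>_. 1)} then 1/2 else 0)"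

lemma finite_configs:
  assumes "finite X"
  shows "finite (configs d X)"
proof -
  have "inj_on (\<lambda>a. restrict a X) (configs d X)"
    by (auto simp: inj_on_def configs_def restrict_def fun_eq_iff) metis
  moreover have "(\<lambda>a. restrict a X) ` configs d X \<subseteq> PiE X (\<lambda>i. {..<d i})"
    by (auto simp: configs_def PiE_def extensional_def)
  ultimately show ?thesis
    using assms by (meson finite_PiE finite_lessThan finite_imageD finite_subset)
qed

lemma diag_op_density:
  assumes "finite X"
    and support: "\<And>a. a \<notin> configs d X \<Longrightarrow> p a = 0"
    and nonneg: "\<And>a. p a \<ge> 0"
    and trace: "(\<Sum>a\<in>configs d X. p a) = 1"
  shows "diag_op p \<in> density_ops d X"
proof -
  let ?C = "configs d X"
  have quadratic_form:
    "(\<Sum>a\<in>?C. \<Sum>b\<in>?C. cnj (v a) * diag_op p a b * v b)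
       = complex_of_real (\<Sum>a\<in>?C. p a * (cmod (v a))\<^sup>2)" for v
  proof -
    have "(\<Sum>b\<in>?C. cnj (v a) * diag_op p a b * v b) = cnj (v a) * complex_of_real (p a) * v a"
      if "a \<in> ?C" for a
      using that finite_configs[OF \<open>finite X\<close>]
      by (simp add: diag_op_def if_distrib if_distribR sum.delta cong: if_cong)
    moreover have "cnj z * complex_of_real r * z = complex_of_real (r * (cmod z)\<^sup>2)" for z r
      using complex_norm_square[of z] by (simp add: mult.commute mult.left_commute)
    ultimately show ?thesis
      by (simp add: of_real_sum)
  qed
  have "0 \<le> (\<Sum>a\<in>?C. p a * (cmod (v a))\<^sup>2)" for v
    by (simp add: nonneg sum_nonneg)
  then have "Im q = 0 \<and> Re q \<ge> 0"
    if "q = (\<Sum>a\<in>?C. \<Sum>b\<in>?C. cnj (v a) * diag_op p a b * v b)" for q v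
    unfolding that quadratic_form by simp
  moreover have "(\<Sum>a\<in>?C. diag_op p a a) = 1"
    using trace by (simp add: diag_op_def of_real_sum[symmetric])
  ultimately show ?thesis
    using support by (auto simp: density_ops_def Let_def) (auto simp: diag_op_def)
qed

lemma cat_mixture_density:
  assumes "finite X" "X \<noteq> {}" "\<forall>i\<in>X. d i > 1"
  shows "cat_mixture X \<in> density_ops d X"
  unfolding cat_mixture_def
proof (rule diag_op_density[OF \<open>finite X\<close>])
  have zero: "(\<lambda>_. 0) \<in> configs d X" and one: "restr X (\<lambda>_. 1) \<in> configs d X"
    using assms(3) by (auto simp: configs_def restr_def)
  moreover have "(\<lambda>_. 0::nat) \<noteq> restr X (\<lambda>_. 1)"
    using assms(2) by (auto simp: restr_def fun_eq_iff)
  moreover have "configs d X \<inter> {(\<lambda>_. 0), restr X (\<lambda>_. 1)} = {(\<lambda>_. 0), restr X (\<lambda>_. 1)}"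
    using zero one by blast
  ultimately show "(\<Sum>a\<in>configs d X. if a \<in> {(\<lambda>_. 0), restr X (\<lambda>_. 1)} then 1/2 else 0) = (1::real)"
    by (simp only: sum.If_cases[OF finite_configs[OF \<open>finite X\<close>]] Collect_mem_eq) simp
  show "\<And>a. a \<notin> configs d X \<Longrightarrow> (if a \<in> {(\<lambda>_. 0), restr X (\<lambda>_. 1)} then 1/2 else 0) = (0::real)"
    using zero one by auto
qed auto

lemma tensor_diag:
  "x \<in> configs d L \<Longrightarrow> tensor d L P R x x = (\<Prod>Z\<in>P. R Z (restr Z x) (restr Z x))"
  by (simp add: tensor_def)

lemma tensor_diag_exchange:
  assumes "disjoint ups" "Y \<in> ups" "x \<in> configs d L" "y \<in> configs d L"
  defines "c \<equiv> \<lambda>i. if i \<in> Y then x i else y i"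
    and "e \<equiv> \<lambda>i. if i \<in> Y then y i else x i"
  shows "tensor d L ups R c c * tensor d L ups R e e = tensor d L ups R x x * tensor d L ups R y y"
proof -
  have configs: "c \<in> configs d L" "e \<in> configs d L"
    using assms(3,4) by (auto simp: configs_def c_def e_def)
  have "R Z (restr Z c) (restr Z c) * R Z (restr Z e) (restr Z e)
      = R Z (restr Z x) (restr Z x) * R Z (restr Z y) (restr Z y)" if "Z \<in> ups" for Z
  proof (cases "Z = Y")
    case True
    then have "restr Z c = restr Z x" "restr Z e = restr Z y"
      by (auto simp: restr_def c_def e_def fun_eq_iff)
    then show ?thesis by simp
  next
    case False
    with that assms(1,2) have "Z \<inter> Y = {}" by (auto dest: disjointD)
    then have "restr Z c = restr Z y" "restr Z e = restr Z x"
      by (auto simp: restr_def c_def e_def fun_eq_iff)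
    then show ?thesis by (simp add: mult.commute)
  qed
  then show ?thesis
    by (simp add: tensor_diag configs assms(3,4) prod.distrib[symmetric] cong: prod.cong)
qed

lemma tensor_cat_mixture_diag_eq_0_iff:
  assumes "partition_on L xi" "finite L" "x \<in> configs d L"
  shows "tensor d L xi cat_mixture x x = 0 \<longleftrightarrow> (\<exists>Z\<in>xi. restr Z x \<notin> {(\<lambda>_. 0), restr Z (\<lambda>_. 1)})"
proof -
  have "finite xi"
    using assms(1,2) by (metis finite_UnionD partition_on_def)
  then show ?thesis
    by (simp add: tensor_diag[OF assms(3)] cat_mixture_def diag_op_def)
qed

lemma tensor_cat_mixture_in_unc:
  assumes "partition_on {1..n} xi" "\<forall>i\<in>{1..n}. d i > 1"
  shows "tensor d {1..n} xi cat_mixture \<in> unc d n xi"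
proof -
  have "cat_mixture X \<in> density_ops d X" if "X \<in> xi" for X
  proof (rule cat_mixture_density)
    have "X \<subseteq> {1..n}" "X \<noteq> {}"
      using assms(1) that by (auto simp: partition_on_def)
    with assms(2) show "finite X" "X \<noteq> {}" "\<forall>i\<in>X. d i > 1"
      by (auto intro: finite_subset)
  qed
  then show ?thesis
    unfolding unc_def by blast
qed

lemma cat_mixture_product_refines:
  assumes pxi: "partition_on L xi" and pups: "partition_on L ups" and "finite L"
    and d: "\<forall>i\<in>L. d i > 1"
    and eq: "tensor d L xi cat_mixture = tensor d L ups R"
  shows "finer xi ups"
  unfolding finer_def
proof
  let ?T = "\<lambda>x. tensor d L xi cat_mixture x x"
  note diag_eq_0_iff = tensor_cat_mixture_diag_eq_0_iff[OF pxi \<open>finite L\<close>]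
  fix X assume X: "X \<in> xi"
  have XL: "X \<subseteq> L" and "X \<noteq> {}"
    using pxi X by (auto simp: partition_on_def)
  then obtain i where i: "i \<in> X" "i \<in> L" by blast
  with pups obtain Y where Y: "Y \<in> ups" "i \<in> Y" unfolding partition_on_def by blast
  show "\<exists>Y\<in>ups. X \<subseteq> Y"
  proof (rule ccontr)
    assume "\<not> (\<exists>Y\<in>ups. X \<subseteq> Y)"
    with Y obtain j where j: "j \<in> X" "j \<notin> Y" by auto
    define zero :: "nat \<Rightarrow> nat" where "zero = (\<lambda>_. 0)"
    define one where "one = restr X (\<lambda>_. 1)"
    define mixed where "mixed = (\<lambda>k. if k \<in> Y then one k else zero k)"
    have configs: "zero \<in> configs d L" "one \<in> configs d L" "mixed \<in> configs d L"
      using d XL by (auto simp: configs_def restr_def zero_def one_def mixed_def)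
    have "?T zero \<noteq> 0"
      using diag_eq_0_iff[OF configs(1)] by (simp add: zero_def restr_def)
    moreover have "restr Z one \<in> {(\<lambda>_. 0), restr Z (\<lambda>_. 1)}" if "Z \<in> xi" for Z
    proof (cases "Z = X")
      case False
      with pxi that X have "Z \<inter> X = {}" by (auto simp: partition_on_def dest: disjointD)
      then show ?thesis by (auto simp: one_def restr_def fun_eq_iff)
    qed (simp add: one_def restr_def fun_eq_iff)
    then have "?T one \<noteq> 0"
      using diag_eq_0_iff[OF configs(2)] by blast
    moreover have "restr X mixed \<notin> {(\<lambda>_. 0), restr X (\<lambda>_. 1)}"
      using i j Y by (auto simp: restr_def one_def zero_def mixed_def fun_eq_iff)
    then have "?T mixed = 0"
      using X diag_eq_0_iff[OF configs(3)] by blast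
    moreover have "?T (\<lambda>k. if k \<in> Y then zero k else one k) * ?T mixed = ?T zero * ?T one"
      unfolding eq mixed_def using pups Y configs
      by (intro tensor_diag_exchange) (auto simp: partition_on_def)
    ultimately show False
      by simp
  qed
qed

theorem mainTheorem17:
  fixes n :: nat and d :: "nat \<Rightarrow> nat" and Ups Xi :: "nat set set set"
  assumes "n \<ge> 1"
    and "\<forall>i\<in>{1..n}. d i > 1"
    and "Ups \<in> PII n" and "Xi \<in> PII n"
  shows "Ups \<subseteq> Xi \<longleftrightarrow> unc2 d n Ups \<subseteq> unc2 d n Xi"
proof
  assume "unc2 d n Ups \<subseteq> unc2 d n Xi"
  show "Ups \<subseteq> Xi"
  proof
    fix xi assume xi: "xi \<in> Ups"
    then have pxi: "partition_on {1..n} xi"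
      using assms(3) by (auto simp: PII_def PI_def)
    then have "tensor d {1..n} xi cat_mixture \<in> unc d n xi"
      using assms(2) by (rule tensor_cat_mixture_in_unc)
    with xi \<open>unc2 d n Ups \<subseteq> unc2 d n Xi\<close> obtain ups R
      where "ups \<in> Xi" "tensor d {1..n} xi cat_mixture = tensor d {1..n} ups R"
      unfolding unc2_def unc_def by blast
    with pxi assms(2,4) show "xi \<in> Xi"
      using cat_mixture_product_refines[OF pxi _ finite_atLeastAtMost] by (auto simp: PII_def PI_def)
  qed
qed (auto simp: unc2_def)

end
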